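(* For all constants $K_1,K_2>0$ there is a constant $c=c(K_1,K_2)>0$ such that the following holds. Let $A$ be a set of $N$ positive integers and let $g=\gcd(A)$ be the greatest common divisor of all elements of $A$. Suppose that $a/g<N^{K_1}$ for every $a\in A$, that $A\subseteq B.B=\{bb': b,b'\in B\}$ for some finite set $B$ of integers, and that $$\omega\Big(\prod_{a\in A}\frac{a}{g},\,K_2N\Big)\ge M.$$ Then $|B|\ge cM$.
   Context: For a natural number $m$ and a real number $x$, $\omega(m,x)$ denotes the number of distinct prime factors $p$ of $m$ with $p\ge x$. *)

theory Defs
  imports "HOL-Computational_Algebra.Primes" Complex_Main
begin

definition omega :: "nat \<Rightarrow> real \<Rightarrow> nat" where
  "omega m x = card {p \<in> prime_factors m. real p \<ge> x}"

end

theory Submission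
  imports Defs "HOL-Library.Function_Algebras" "HOL-Library.Indicator_Function"
begin

text \<open>Write each a \<in> A as a = u(a) v(a) with u(a), v(a) \<in> B. The vectors
  \<delta>(u(a)) + \<delta>(v(a)) lie in a space of dimension |B|, so a subset A0 \<subseteq> A of size at most |B|
  spans them all, and every constraint f(u(a)) + f(v(a)) = \<nu> that holds on A0 holds on A.
  With f the p-adic valuation and \<nu> = v_p(g), g = gcd A, this shows that a prime dividing
  a/g for some a \<in> A divides a/g for some a \<in> A0. As a/g < N^K1, each a/g has O(1) prime
  factors \<ge> K2 N, hence M = O(|B|).\<close>

text \<open>\<open>'a \<Rightarrow> real\<close> is not a \<open>real_vector\<close> instance, so the vector space is interpreted.\<close>

interpretation fun_vs: vector_space "\<lambda>(c::real) (h::'a \<Rightarrow> real) x. c * h x"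
  by unfold_locales (auto simp: fun_eq_iff algebra_simps)

lemma edge_constraints_basis:
  fixes B :: "'a set" and E :: "'e set" and u v :: "'e \<Rightarrow> 'a"
  assumes B: "finite B" and ends: "u ` E \<subseteq> B" "v ` E \<subseteq> B"
  obtains E0 where "E0 \<subseteq> E" "card E0 \<le> card B"
    "\<And>(f :: 'a \<Rightarrow> real) \<nu>. \<forall>e\<in>E0. f (u e) + f (v e) = \<nu> \<Longrightarrow>
       \<forall>e\<in>E. f (u e) + f (v e) = \<nu>"
proof -
  define w :: "'e \<Rightarrow> 'a \<Rightarrow> real" where "w e = indicator {u e} + indicator {v e}" for e
  obtain V where V: "V \<subseteq> w ` E" "fun_vs.independent V" "w ` E \<subseteq> fun_vs.span V"
    using fun_vs.maximal_independent_subset by blast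
  have "w ` E \<subseteq> fun_vs.span ((\<lambda>b. indicator {b}) ` B)"
  proof (clarsimp simp: w_def)
    fix e assume "e \<in> E"
    then have "indicator {u e} \<in> fun_vs.span ((\<lambda>b. indicator {b}) ` B)"
      "indicator {v e} \<in> fun_vs.span ((\<lambda>b. indicator {b}) ` B)"
      using ends by (blast intro: fun_vs.span_base)+
    then show "indicator {u e} + indicator {v e} \<in> fun_vs.span ((\<lambda>b. indicator {b}) ` B)"
      by (rule fun_vs.span_add)
  qed
  then have "V \<subseteq> fun_vs.span ((\<lambda>b. indicator {b}) ` B)"
    using V(1) by blast
  then have "card V \<le> card ((\<lambda>b. indicator {b} :: 'a \<Rightarrow> real) ` B)"
    using fun_vs.independent_span_bound[OF finite_imageI[OF B]] V(2) by blast
  then have card_V: "card V \<le> card B"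
    using card_image_le[OF B] order_trans by blast
  obtain E0 where E0: "E0 \<subseteq> E" "inj_on w E0" "V = w ` E0"
    using V(1) by (auto simp: subset_image_inj)
  show thesis
  proof
    show "E0 \<subseteq> E" by fact
    show "card E0 \<le> card B" using E0 card_V by (simp add: card_image)
  next
    fix f :: "'a \<Rightarrow> real" and \<nu>
    assume on_E0: "\<forall>e\<in>E0. f (u e) + f (v e) = \<nu>"
    \<comment> \<open>The constraint at \<open>e\<close> is a linear functional applied to the edge vector \<open>w e\<close>.\<close>
    define L where "L h = (\<Sum>b\<in>B. h b * (f b - \<nu> / 2))" for h
    have L_w: "L (w e) = f (u e) + f (v e) - \<nu>" if "e \<in> E" for e
    proof -
      have "u e \<in> B" "v e \<in> B" using that ends by auto
      then show ?thesis
        by (simp add: L_def w_def indicator_def distrib_right sum.distrib if_distrib B)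
    qed
    have "fun_vs.subspace {h. L h = 0}"
      by (auto simp: fun_vs.subspace_def L_def sum.distrib distrib_right sum_distrib_left[symmetric]
          mult.assoc)
    moreover have "V \<subseteq> {h. L h = 0}"
      using on_E0 E0 L_w by auto
    ultimately have "w ` E \<subseteq> {h. L h = 0}"
      using V(3) fun_vs.span_minimal by blast
    then show "\<forall>e\<in>E. f (u e) + f (v e) = \<nu>"
      using L_w by auto
  qed
qed

lemma prod_subset_prime_factors_le:
  fixes m :: nat
  assumes "m > 0" "Q \<subseteq> prime_factors m"
  shows "\<Prod>Q \<le> m"
proof -
  have "\<Prod>Q dvd (\<Prod>p\<in>prime_factors m. p)"
    using assms(2) by (simp add: prod_dvd_prod_subset)
  also have "\<dots> dvd (\<Prod>p\<in>prime_factors m. p ^ multiplicity p m)"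
    using assms(1) by (intro prod_dvd_prod) (simp add: prime_factors_multiplicity dvd_power)
  also have "\<dots> = m"
    using prime_factorization_nat[OF assms(1)] by simp
  finally show ?thesis
    using assms(1) by (simp add: dvd_imp_le)
qed

lemma power_omega_le:
  fixes m :: nat and x y :: real
  assumes "m > 0" "y > 0" "\<And>p. prime p \<Longrightarrow> real p \<ge> x \<Longrightarrow> real p \<ge> y"
  shows "y ^ omega m x \<le> real m"
proof -
  define Q where "Q = {p \<in> prime_factors m. real p \<ge> x}"
  have "y ^ omega m x = (\<Prod>p\<in>Q. y)"
    by (simp add: omega_def Q_def)
  also have "\<dots> \<le> (\<Prod>p\<in>Q. real p)"
    using assms(2,3) by (intro prod_mono) (auto simp: Q_def in_prime_factors_iff)
  also have "\<dots> \<le> real m"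
  proof -
    have "\<Prod>Q \<le> m"
      using prod_subset_prime_factors_le[OF assms(1), of Q] by (auto simp: Q_def)
    then show ?thesis
      by (simp flip: of_nat_prod)
  qed
  finally show ?thesis .
qed

lemma omega_le_sum_omega:
  assumes "finite I" "prime_factors m \<subseteq> (\<Union>i\<in>I. prime_factors (n i))"
  shows "omega m x \<le> (\<Sum>i\<in>I. omega (n i) x)"
proof -
  have "{p \<in> prime_factors m. real p \<ge> x} \<subseteq> (\<Union>i\<in>I. {p \<in> prime_factors (n i). real p \<ge> x})"
    using assms(2) by blast
  then have "omega m x \<le> card (\<Union>i\<in>I. {p \<in> prime_factors (n i). real p \<ge> x})"
    unfolding omega_def using assms(1) by (intro card_mono) auto
  also have "\<dots> \<le> (\<Sum>i\<in>I. omega (n i) x)"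
    unfolding omega_def by (rule card_UN_le[OF assms(1)])
  finally show ?thesis .
qed

lemma omega_mult_ln_le:
  fixes m :: nat and x y :: real
  assumes "m > 0" "y > 1" "\<And>p. prime p \<Longrightarrow> real p \<ge> x \<Longrightarrow> real p \<ge> y"
  shows "real (omega m x) * ln y \<le> ln (real m)"
proof -
  have "ln (y ^ omega m x) \<le> ln (real m)"
    using power_omega_le[OF assms(1) _ assms(3)] assms(1,2) by simp
  then show ?thesis
    using assms(2) by (simp add: ln_realpow)
qed

text \<open>For \<open>N \<ge> K2\<^sup>-\<^sup>2\<close> the primes \<open>\<ge> K2 N\<close> are \<open>\<ge> \<surd>N\<close>; for smaller \<open>N\<close> the bound
  \<open>N\<^sup>K\<^sup>1\<close> on \<open>m\<close> is itself a constant.\<close>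
lemma omega_uniform_bound:
  fixes K1 K2 :: real
  assumes "K1 > 0" "K2 > 0"
  obtains C where "C > 0"
    "\<And>(N::nat) (m::nat). m \<ge> 1 \<Longrightarrow> real m < real N powr K1 \<Longrightarrow>
       real (omega m (K2 * real N)) \<le> C"
proof
  define C where "C = 2 * K1 + 2 * K1 * \<bar>ln K2\<bar> / ln 2"
  have C_terms_nonneg: "2 * K1 \<ge> 0" "2 * K1 * \<bar>ln K2\<bar> / ln 2 \<ge> 0"
    using assms(1) by simp_all
  show "C > 0"
    using assms(1) C_terms_nonneg(2) unfolding C_def by linarith
  fix N m :: nat
  assume m: "m \<ge> 1" and m_less: "real m < real N powr K1"
  define t where "t = real (omega m (K2 * real N))"
  have "N \<noteq> 0"
  proof
    assume "N = 0" with m_less show False by simp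
  qed
  moreover have "N \<noteq> 1"
  proof
    assume "N = 1" with m m_less show False by simp
  qed
  ultimately have "real N > 1"
    by simp
  then have ln_N: "ln (real N) > 0"
    by simp
  have "ln (real m) < ln (real N powr K1)"
    using m m_less \<open>real N > 1\<close> by (subst ln_less_cancel_iff) auto
  then have ln_m: "ln (real m) < K1 * ln (real N)"
    using \<open>real N > 1\<close> by (simp add: ln_powr)
  show "t \<le> C"
  proof (cases "ln (real N) \<ge> - 2 * ln K2")
    case True
    have ln_y: "ln (K2 * real N) \<ge> ln (real N) / 2"
      using True assms(2) \<open>real N > 1\<close> by (simp add: ln_mult)
    then have ln_y_pos: "ln (K2 * real N) > 0"
      using ln_N by linarith
    then have "K2 * real N > 1"
      using assms(2) \<open>real N > 1\<close> by simp
    then have "t * ln (K2 * real N) \<le> ln (real m)"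
      unfolding t_def using m by (intro omega_mult_ln_le) auto
    also have "\<dots> < 2 * K1 * ln (K2 * real N)"
    proof -
      have "K1 * ln (real N) \<le> K1 * (2 * ln (K2 * real N))"
        using ln_y assms(1) by (intro mult_left_mono) auto
      then show ?thesis
        using ln_m by linarith
    qed
    finally have "t < 2 * K1"
      using ln_y_pos by (simp add: mult_less_cancel_right)
    then show ?thesis
      using C_terms_nonneg unfolding C_def by linarith
  next
    case False
    have "t * ln 2 \<le> ln (real m)"
      unfolding t_def using m by (intro omega_mult_ln_le) (auto dest: prime_ge_2_nat)
    also have "\<dots> < K1 * (2 * \<bar>ln K2\<bar>)"
    proof -
      have "K1 * ln (real N) \<le> K1 * (2 * \<bar>ln K2\<bar>)"
        using False assms(1) by (intro mult_left_mono) auto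
      then show ?thesis
        using ln_m by linarith
    qed
    finally have "t < 2 * K1 * \<bar>ln K2\<bar> / ln 2"
      by (simp add: field_simps)
    then show ?thesis
      using C_terms_nonneg unfolding C_def by linarith
  qed
qed

lemma prime_dvd_div_iff_multiplicity:
  fixes a b p :: "'a :: factorial_semiring"
  assumes "prime_elem p" "b dvd a" "a \<noteq> 0"
  shows "p dvd a div b \<longleftrightarrow> multiplicity p a \<noteq> multiplicity p b"
proof -
  have a: "a = b * (a div b)" and "b \<noteq> 0" "a div b \<noteq> 0"
    using assms(2,3) by auto
  then have "multiplicity p a = multiplicity p b + multiplicity p (a div b)"
    using assms(1) by (metis prime_elem_multiplicity_mult_distrib)
  then show ?thesis
    using assms(1) \<open>a div b \<noteq> 0\<close> by (simp add: prime_multiplicity_gt_zero_iff[symmetric])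
qed

lemma div_Gcd_pos:
  fixes A :: "int set"
  assumes "a \<in> A" "a > 0"
  shows "a div Gcd A > 0"
proof -
  have "Gcd A \<noteq> 0"
    using assms by (auto simp: Gcd_0_iff)
  then have "Gcd A > 0"
    by (simp add: order_neq_le_trans)
  moreover have "a = Gcd A * (a div Gcd A)"
    using assms(1) by simp
  ultimately show ?thesis
    using assms(2) by (metis zero_less_mult_pos)
qed

lemma multiplicity_on_product_set_basis:
  fixes A B :: "'a :: factorial_semiring set"
  assumes B: "finite B" and "0 \<notin> A" and A_sub: "A \<subseteq> {b * b' | b b'. b \<in> B \<and> b' \<in> B}"
  obtains A0 where "A0 \<subseteq> A" "card A0 \<le> card B"
    "\<And>p k. prime_elem p \<Longrightarrow> \<forall>a\<in>A0. multiplicity p a = k \<Longrightarrow> \<forall>a\<in>A. multiplicity p a = k"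
proof -
  have "\<forall>a\<in>A. \<exists>e. fst e \<in> B \<and> snd e \<in> B \<and> a = fst e * snd e"
    using A_sub by force
  then obtain e where e: "\<forall>a\<in>A. fst (e a) \<in> B \<and> snd (e a) \<in> B \<and> a = fst (e a) * snd (e a)"
    by (rule bchoice[elim_format]) blast
  define u v where "u = fst \<circ> e" and "v = snd \<circ> e"
  have uv: "u a \<in> B \<and> v a \<in> B \<and> a = u a * v a" if "a \<in> A" for a
    using e that by (simp add: u_def v_def)
  obtain A0 where A0: "A0 \<subseteq> A" "card A0 \<le> card B"
    and A0_determines: "\<And>(f :: 'a \<Rightarrow> real) \<nu>. \<forall>a\<in>A0. f (u a) + f (v a) = \<nu> \<Longrightarrow>
       \<forall>a\<in>A. f (u a) + f (v a) = \<nu>"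
    using edge_constraints_basis[OF B, of u A v] uv by blast
  have multiplicity_uv: "real (multiplicity p a) =
      real (multiplicity p (u a)) + real (multiplicity p (v a))"
    if "a \<in> A" "prime_elem p" for a p
  proof -
    have "u a \<noteq> 0" "v a \<noteq> 0" "a = u a * v a"
      using uv[OF that(1)] \<open>0 \<notin> A\<close> that(1) by auto
    then have "multiplicity p (u a * v a) = multiplicity p (u a) + multiplicity p (v a)"
      using that(2) by (intro prime_elem_multiplicity_mult_distrib)
    then show ?thesis
      using \<open>a = u a * v a\<close> by simp
  qed
  show thesis
  proof (rule that[OF A0])
    fix p k assume p: "prime_elem p" and k: "\<forall>a\<in>A0. multiplicity p a = k"
    have "real (multiplicity p (u a)) + real (multiplicity p (v a)) = real k" if "a \<in> A0" for a
      using multiplicity_uv[of a p] k that A0(1) p by auto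
    then have "\<forall>a\<in>A0. real (multiplicity p (u a)) + real (multiplicity p (v a)) = real k"
      by blast
    then have on_A: "\<forall>a\<in>A. real (multiplicity p (u a)) + real (multiplicity p (v a)) = real k"
      by (rule A0_determines)
    show "\<forall>a\<in>A. multiplicity p a = k"
    proof
      fix a assume "a \<in> A"
      then have "real (multiplicity p a) = real k"
        using on_A multiplicity_uv[OF _ p] by simp
      then show "multiplicity p a = k"
        by simp
    qed
  qed
qed

lemma prime_factors_prod_div_Gcd_subset:
  fixes A B :: "int set"
  assumes A: "finite A" "\<forall>a\<in>A. a > 0" and B: "finite B"
    and A_sub: "A \<subseteq> {b * b' | b b'. b \<in> B \<and> b' \<in> B}"
  obtains A0 where "A0 \<subseteq> A" "card A0 \<le> card B"
    "prime_factors (\<Prod>a\<in>A. nat (a div Gcd A)) \<subseteq> (\<Union>a\<in>A0. prime_factors (nat (a div Gcd A)))"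
proof -
  have "0 \<notin> A"
    using A(2) by auto
  then obtain A0 where A0: "A0 \<subseteq> A" "card A0 \<le> card B"
    and A0_determines: "\<And>p k. prime_elem p \<Longrightarrow> \<forall>a\<in>A0. multiplicity p a = k \<Longrightarrow>
       \<forall>a\<in>A. multiplicity p a = k"
    using multiplicity_on_product_set_basis[OF B _ A_sub] by blast
  have factor_iff: "p \<in> prime_factors (nat (a div Gcd A)) \<longleftrightarrow>
      multiplicity (int p) a \<noteq> multiplicity (int p) (Gcd A)" if "a \<in> A" "prime p" for a p
  proof -
    have "a div Gcd A > 0"
      using div_Gcd_pos that(1) A(2) by blast
    then have "p \<in> prime_factors (nat (a div Gcd A)) \<longleftrightarrow> int p dvd a div Gcd A"
      using that(2) by (auto simp: in_prime_factors_iff simp flip: int_dvd_int_iff)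
    also have "\<dots> \<longleftrightarrow> multiplicity (int p) a \<noteq> multiplicity (int p) (Gcd A)"
      using that A(2) by (intro prime_dvd_div_iff_multiplicity) auto
    finally show ?thesis .
  qed
  show thesis
  proof (rule that[OF A0])
    show "prime_factors (\<Prod>a\<in>A. nat (a div Gcd A)) \<subseteq> (\<Union>a\<in>A0. prime_factors (nat (a div Gcd A)))"
    proof
      fix p assume "p \<in> prime_factors (\<Prod>a\<in>A. nat (a div Gcd A))"
      then have p: "prime p" and "p dvd (\<Prod>a\<in>A. nat (a div Gcd A))"
        by (auto simp: in_prime_factors_iff)
      then obtain a where a: "a \<in> A" "p dvd nat (a div Gcd A)"
        using A(1) by (auto simp: prime_dvd_prod_iff)
      moreover have "a div Gcd A > 0"
        using div_Gcd_pos a(1) A(2) by simp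
      ultimately have "p \<in> prime_factors (nat (a div Gcd A))"
        using p by (auto simp: in_prime_factors_iff)
      then have "\<not> (\<forall>a\<in>A. multiplicity (int p) a = multiplicity (int p) (Gcd A))"
        using factor_iff a(1) p by blast
      moreover have "prime_elem (int p)"
        using p by simp
      ultimately have "\<not> (\<forall>a\<in>A0. multiplicity (int p) a = multiplicity (int p) (Gcd A))"
        using A0_determines by blast
      then obtain a' where "a' \<in> A0" "multiplicity (int p) a' \<noteq> multiplicity (int p) (Gcd A)"
        by blast
      moreover have "a' \<in> A"
        using \<open>a' \<in> A0\<close> A0(1) by blast
      ultimately show "p \<in> (\<Union>a\<in>A0. prime_factors (nat (a div Gcd A)))"
        using factor_iff p by blast
    qed
  qed
qed

theorem proposition1:
  fixes K1 K2 :: real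
  assumes "K1 > 0" and "K2 > 0"
  shows "\<exists>c::real. c > 0 \<and>
    (\<forall>(A::int set) (B::int set) (N::nat) (M::real).
       finite A \<longrightarrow> card A = N \<longrightarrow> (\<forall>a\<in>A. a > 0) \<longrightarrow>
       (\<forall>a\<in>A. real_of_int a / real_of_int (Gcd A) < real N powr K1) \<longrightarrow>
       finite B \<longrightarrow> A \<subseteq> {b * b' | b b'. b \<in> B \<and> b' \<in> B} \<longrightarrow>
       real (omega (\<Prod>a\<in>A. nat (a div Gcd A)) (K2 * real N)) \<ge> M \<longrightarrow>
       real (card B) \<ge> c * M)"
proof -
  obtain C where "C > 0" and omega_le_C: "\<And>(N::nat) (m::nat). m \<ge> 1 \<Longrightarrow>
      real m < real N powr K1 \<Longrightarrow> real (omega m (K2 * real N)) \<le> C"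
    using omega_uniform_bound[OF assms] by blast
  show ?thesis
  proof (intro exI[of _ "1 / C"] conjI allI impI)
    show "1 / C > 0"
      using \<open>C > 0\<close> by simp
    fix A B :: "int set" and N :: nat and M :: real
    assume A: "finite A" "card A = N" "\<forall>a\<in>A. a > 0"
      and A_small: "\<forall>a\<in>A. real_of_int a / real_of_int (Gcd A) < real N powr K1"
      and B: "finite B" and A_sub: "A \<subseteq> {b * b' | b b'. b \<in> B \<and> b' \<in> B}"
      and M: "real (omega (\<Prod>a\<in>A. nat (a div Gcd A)) (K2 * real N)) \<ge> M"
    obtain A0 where A0: "A0 \<subseteq> A" "card A0 \<le> card B" and covers:
      "prime_factors (\<Prod>a\<in>A. nat (a div Gcd A)) \<subseteq> (\<Union>a\<in>A0. prime_factors (nat (a div Gcd A)))"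
      using prime_factors_prod_div_Gcd_subset[OF A(1,3) B A_sub] by blast
    have omega_quotient_le: "real (omega (nat (a div Gcd A)) (K2 * real N)) \<le> C" if "a \<in> A" for a
    proof -
      have "a div Gcd A > 0"
        using div_Gcd_pos that A(3) by blast
      moreover have "real_of_int (a div Gcd A) = real_of_int a / real_of_int (Gcd A)"
        using that by (simp add: real_of_int_div)
      ultimately show ?thesis
        using omega_le_C[of "nat (a div Gcd A)" N] A_small that by simp
    qed
    have "omega (\<Prod>a\<in>A. nat (a div Gcd A)) (K2 * real N) \<le>
        (\<Sum>a\<in>A0. omega (nat (a div Gcd A)) (K2 * real N))"
      by (rule omega_le_sum_omega[OF finite_subset[OF A0(1) A(1)] covers])
    then have "M \<le> real (\<Sum>a\<in>A0. omega (nat (a div Gcd A)) (K2 * real N))"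
      using M by (meson of_nat_le_iff order_trans)
    also have "\<dots> \<le> real (card A0) * C"
      using omega_quotient_le A0(1) sum_bounded_above[of A0 _ C] by (auto simp: subset_iff)
    also have "\<dots> \<le> real (card B) * C"
      using A0(2) \<open>C > 0\<close> by simp
    finally show "1 / C * M \<le> real (card B)"
      using \<open>C > 0\<close> by (simp add: field_simps)
  qed
qed
end
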